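(* Let $P$ be an orthogonal polygon without holes, let $\eta\in\mathbb{N}$, and let $S$ be a maximal square of $P$ with side length $d$ such that: the top and bottom sides of $S$ overlap with horizontal edges $e_1$ and $e_2$ of $P$ respectively; $e_1$ contains the top-right corner of $S$; $e_2$ contains the bottom-right corner of $S$; and there is a strip $Y$ between $e_1$ and $e_2$ whose right side is at distance more than $\eta d$ from the right side of $S$. Let $R$ be the rec-pack of width $d$ and strength $\eta$ whose vertical sides have length $d$ and horizontal sides have length $\eta d$, and whose left side coincides with the right side of $S$. If $\mathcal{R}$ is a partial solution with $S\in\mathcal{R}$ such that $R$ does not overlap any rec-pack in $\mathcal{R}$, then $\mathcal{R}\cup\{R\}$ is also a partial solution.
   Context: $P$ is a simple polygon with integer vertex coordinates and axis-parallel edges. A valid square is an axis-parallel square contained in $P$; it is maximal if no larger-area valid square contains it. A strip of $P$ is a maximal axis-parallel non-square rectangular region inside $P$ each of whose two longer sides is completely contained in an edge of $P$. A rec-pack is an axis-parallel rectangle contained in $P$ of dimensions $t\times \eta t$ or $\eta t\times t$ with $\eta\in\mathbb{N}$ ($t$ is its width, $\eta$ its strength); every valid square is a rec-pack; its extraction $\mathsf{ext}(R)$ is the set of the $\eta$ side-$t$ squares tiling $R$. A set $\mathcal{R}'$ of rec-packs is a minimum covering of $P$ if $\bigcup_{R\in\mathcal{R}'}\mathsf{ext}(R)$ is a minimum-cardinality set of valid squares with union $P$ and distinct rec-packs have disjoint extractions. A partial solution is a set of rec-packs contained in some minimum covering. *)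

theory Defs
  imports "HOL-Analysis.Analysis"
begin

type_synonym pt = "real \<times> real"

definition vpt :: "(int \<times> int) list \<Rightarrow> nat \<Rightarrow> pt" where
  "vpt vs i = (real_of_int (fst (vs ! (i mod length vs))), real_of_int (snd (vs ! (i mod length vs))))"

fun polypath :: "pt list \<Rightarrow> real \<Rightarrow> pt" where
  "polypath [] = linepath 0 0"
| "polypath [a] = linepath a a"
| "polypath [a, b] = linepath a b"
| "polypath (a # b # c # rest) = linepath a b +++ polypath (b # c # rest)"

definition boundary_path :: "(int \<times> int) list \<Rightarrow> real \<Rightarrow> pt" where
  "boundary_path vs = polypath (map (vpt vs) [0..<length vs] @ [vpt vs 0])"

definition edge :: "(int \<times> int) list \<Rightarrow> nat \<Rightarrow> pt set" where
  "edge vs i = closed_segment (vpt vs i) (vpt vs (Suc i))"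

definition horiz_edge :: "(int \<times> int) list \<Rightarrow> nat \<Rightarrow> bool" where
  "horiz_edge vs i \<longleftrightarrow> snd (vpt vs i) = snd (vpt vs (Suc i)) \<and> fst (vpt vs i) \<noteq> fst (vpt vs (Suc i))"

definition vert_edge :: "(int \<times> int) list \<Rightarrow> nat \<Rightarrow> bool" where
  "vert_edge vs i \<longleftrightarrow> fst (vpt vs i) = fst (vpt vs (Suc i)) \<and> snd (vpt vs i) \<noteq> snd (vpt vs (Suc i))"

text \<open>A simple polygon (hence without holes) with integer vertices and axis-parallel edges;
  consecutive edges alternate between horizontal and vertical, so the listed edges are
  exactly the (maximal) edges of the polygon.\<close>
definition ortho_polygon :: "(int \<times> int) list \<Rightarrow> bool" where
  "ortho_polygon vs \<longleftrightarrow> length vs \<ge> 4 \<and> simple_path (boundary_path vs) \<and>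
     (\<forall>i < length vs. (horiz_edge vs i \<and> vert_edge vs (Suc i)) \<or> (vert_edge vs i \<and> horiz_edge vs (Suc i)))"

definition region :: "(int \<times> int) list \<Rightarrow> pt set" where
  "region vs = path_image (boundary_path vs) \<union> inside (path_image (boundary_path vs))"

definition sq :: "real \<Rightarrow> real \<Rightarrow> real \<Rightarrow> pt set" where
  "sq x y s = cbox (x, y) (x + s, y + s)"

definition valid_square :: "pt set \<Rightarrow> pt set \<Rightarrow> bool" where
  "valid_square P Q \<longleftrightarrow> (\<exists>x y s. s > 0 \<and> Q = sq x y s) \<and> Q \<subseteq> P"

definition maximal_square :: "pt set \<Rightarrow> pt set \<Rightarrow> bool" where
  "maximal_square P Q \<longleftrightarrow> valid_square P Q \<and>
     \<not> (\<exists>Q'. valid_square P Q' \<and> Q \<subseteq> Q' \<and> measure lebesgue Q' > measure lebesgue Q)"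

definition seg_overlap :: "pt set \<Rightarrow> pt set \<Rightarrow> bool" where
  "seg_overlap A B \<longleftrightarrow> (\<exists>p q. p \<noteq> q \<and> p \<in> A \<inter> B \<and> q \<in> A \<inter> B)"

definition strip_candidate :: "(int \<times> int) list \<Rightarrow> pt set \<Rightarrow> bool" where
  "strip_candidate vs Y \<longleftrightarrow> Y \<subseteq> region vs \<and>
     (\<exists>a b c e. a < c \<and> b < e \<and> Y = cbox (a, b) (c, e) \<and>
        ((c - a > e - b \<and> (\<exists>i<length vs. closed_segment (a, e) (c, e) \<subseteq> edge vs i)
                        \<and> (\<exists>j<length vs. closed_segment (a, b) (c, b) \<subseteq> edge vs j))
       \<or> (e - b > c - a \<and> (\<exists>i<length vs. closed_segment (a, b) (a, e) \<subseteq> edge vs i)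
                        \<and> (\<exists>j<length vs. closed_segment (c, b) (c, e) \<subseteq> edge vs j))))"

definition strip :: "(int \<times> int) list \<Rightarrow> pt set \<Rightarrow> bool" where
  "strip vs Y \<longleftrightarrow> strip_candidate vs Y \<and> \<not> (\<exists>Y'. strip_candidate vs Y' \<and> Y \<subset> Y')"

definition recpack :: "pt set \<Rightarrow> pt set \<Rightarrow> bool" where
  "recpack P R \<longleftrightarrow> R \<subseteq> P \<and>
     (\<exists>a b t (k::nat). t > 0 \<and> k \<ge> 1 \<and>
        (R = cbox (a, b) (a + real k * t, b + t) \<or> R = cbox (a, b) (a + t, b + real k * t)))"

definition ext :: "pt set \<Rightarrow> pt set set" where
  "ext R = {Q. \<exists>a b t (k::nat) (i::nat). t > 0 \<and> k \<ge> 1 \<and> i < k \<and>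
     ((R = cbox (a, b) (a + real k * t, b + t) \<and> Q = sq (a + real i * t) b t)
    \<or> (R = cbox (a, b) (a + t, b + real k * t) \<and> Q = sq a (b + real i * t) t))}"

definition min_square_cover :: "pt set \<Rightarrow> pt set set \<Rightarrow> bool" where
  "min_square_cover P U \<longleftrightarrow> finite U \<and> (\<forall>Q\<in>U. valid_square P Q) \<and> \<Union>U = P \<and>
     (\<forall>V. finite V \<and> (\<forall>Q\<in>V. valid_square P Q) \<and> \<Union>V = P \<longrightarrow> card U \<le> card V)"

definition min_covering :: "pt set \<Rightarrow> pt set set \<Rightarrow> bool" where
  "min_covering P Rs \<longleftrightarrow> (\<forall>R\<in>Rs. recpack P R) \<and>
     (\<forall>R\<in>Rs. \<forall>R'\<in>Rs. R \<noteq> R' \<longrightarrow> ext R \<inter> ext R' = {}) \<and>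
     min_square_cover P (\<Union>R\<in>Rs. ext R)"

definition partial_solution :: "pt set \<Rightarrow> pt set set \<Rightarrow> bool" where
  "partial_solution P Rs \<longleftrightarrow> (\<exists>Rs'. min_covering P Rs' \<and> Rs \<subseteq> Rs')"

definition overlaps :: "pt set \<Rightarrow> pt set \<Rightarrow> bool" where
  "overlaps A B \<longleftrightarrow> interior A \<inter> interior B \<noteq> {}"

end

theory Submission
  imports Defs
begin

text \<open>
  The square S and the strip Y both lie in the band between the edges e1 and e2. No boundary
  edge enters the open band from the left side of S to the right end of Y: an edge meeting it
  is trapped in the gap between S and Y, and following the boundary cycle would trap e1 as
  well. So the band lies in P, and R is a rec-pack. A valid square meeting the interior of R
  can cross neither e1 nor e2, so its side is at most d. Now place \<eta> points on the midline
  of R, pairwise more than d apart and left of every square that meets R but sticks out of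
  S \<union> R. In a minimum covering they are covered by \<eta> distinct squares lying in S \<union> R and
  overlapping R. Replacing these by the \<eta> squares of R, and breaking every rec-pack that
  loses a square into single squares, gives a minimum covering containing R and \<R>.
\<close>

section \<open>The boundary of an orthogonal polygon\<close>

lemma not_interior_region_if_on_simple_loop:
  fixes g :: "real \<Rightarrow> real \<times> real"
  assumes "simple_path g" "pathfinish g = pathstart g" "p \<in> path_image g"
  shows "p \<notin> interior (path_image g \<union> inside (path_image g))"
proof
  let ?C = "path_image g"
  assume "p \<in> interior (?C \<union> inside ?C)"
  then obtain e where "e > 0" and ball: "ball p e \<subseteq> ?C \<union> inside ?C"
    by (meson mem_interior)
  have "?C homeomorphic sphere (0::complex) 1"
    using homeomorphic_simple_path_image_circle[OF assms(1,2), of 1] by simp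
  also have "sphere (0::complex) 1 homeomorphic sphere (0::real \<times> real) 1"
    by (rule homeomorphic_spheres_gen) auto
  finally have sphere: "?C homeomorphic sphere (0::real \<times> real) 1" .
  \<comment> \<open>by Jordan--Brouwer, the curve is the frontier of the unbounded component of its complement\<close>
  obtain z where z: "z \<in> outside ?C"
    using outside_bounded_nonempty bounded_simple_path_image[OF assms(1)] by blast
  define T where "T = connected_component_set (- ?C) z"
  have "z \<in> - ?C" using z by (simp add: outside_def)
  then have "T \<in> components (- ?C)" unfolding T_def components_iff by blast
  then have "frontier T = ?C"
    by (rule Jordan_Brouwer_frontier[OF sphere]) simp
  moreover have "T \<subseteq> outside ?C"
  proof
    fix w assume "w \<in> T"
    then have "connected_component_set (- ?C) w = T" "w \<in> - ?C"
      unfolding T_def by (metis connected_component_eq mem_Collect_eq connected_component_in)+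
    then show "w \<in> outside ?C" using z unfolding outside_def T_def by auto
  qed
  moreover have "p \<in> closure T" using \<open>frontier T = ?C\<close> assms(3) by (auto simp: frontier_def)
  ultimately obtain w where "w \<in> outside ?C" "dist w p < e"
    using \<open>e > 0\<close> closure_approachable by blast
  then have "w \<in> (?C \<union> inside ?C) \<inter> outside ?C"
    using ball by (auto simp: dist_commute)
  then show False
    using inside_Int_outside[of ?C] by (auto simp: outside_def)
qed

lemma closure_subset_inside_if_connected:
  fixes C :: "'a::real_normed_vector set"
  assumes "closed C" "connected B" "B \<inter> C = {}" "z \<in> B" "z \<in> inside C"
  shows "closure B \<subseteq> C \<union> inside C"
proof -
  have "B \<subseteq> inside C \<union> outside C" using assms(3) inside_Un_outside[of C] by blast
  moreover have "\<not> B \<subseteq> outside C" using assms(4,5) inside_Int_outside[of C] by blast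
  ultimately have "B \<subseteq> inside C"
    using connectedD[OF assms(2) open_inside[OF assms(1)] open_outside[OF assms(1)]] inside_Int_outside[of C]
    by blast
  then show ?thesis using closure_mono closure_inside_subset[OF assms(1)] by blast
qed

lemma pathstart_polypath: "pathstart (polypath (a # l)) = a"
  by (induction "a # l" arbitrary: a l rule: polypath.induct) auto

lemma pathfinish_polypath: "l \<noteq> [] \<Longrightarrow> pathfinish (polypath l) = last l"
  by (induction l rule: polypath.induct) auto

lemma path_image_polypath:
  "length l \<ge> 2 \<Longrightarrow> path_image (polypath l) = (\<Union>k < length l - 1. closed_segment (l ! k) (l ! Suc k))"
proof (induction l rule: polypath.induct)
  case (4 a b c rest)
  have "path_image (polypath (a # b # c # rest)) = closed_segment a b \<union> path_image (polypath (b # c # rest))"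
    by (simp add: path_image_join pathstart_polypath)
  also have "\<dots> = closed_segment a b \<union> (\<Union>k < Suc (length rest). closed_segment ((b # c # rest) ! k) ((b # c # rest) ! Suc k))"
    using "4.IH" by simp
  also have "\<dots> = (\<Union>k < Suc (Suc (length rest)). closed_segment ((a # b # c # rest) ! k) ((a # b # c # rest) ! Suc k))"
    unfolding lessThan_Suc_eq_insert_0[of "Suc (length rest)"] by (simp add: image_image)
  finally show ?case by simp
qed (auto simp: lessThan_Suc)

lemma polypath_arc_segments_meet_at_vertex:
  assumes "arc (polypath l)" "i < j" "j < length l - 1"
  shows "closed_segment (l ! i) (l ! Suc i) \<inter> closed_segment (l ! j) (l ! Suc j) \<subseteq> {l ! Suc i}"
  using assms
proof (induction l arbitrary: i j rule: polypath.induct)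
  case (4 a b c rest)
  have "pathfinish (linepath a b) = pathstart (polypath (b # c # rest))"
    by (simp add: pathstart_polypath)
  from arc_join_eq[OF this] have arc: "arc (polypath (b # c # rest))"
    and first: "closed_segment a b \<inter> path_image (polypath (b # c # rest)) \<subseteq> {b}"
    using "4.prems"(1) by (auto simp: pathstart_polypath)
  obtain j' where j': "j = Suc j'" using "4.prems"(2) by (cases j) auto
  show ?case
  proof (cases i)
    case 0
    have "closed_segment ((b # c # rest) ! j') ((b # c # rest) ! Suc j') \<subseteq> path_image (polypath (b # c # rest))"
      using "4.prems"(3) j' by (subst path_image_polypath) auto
    then show ?thesis using first 0 j' by auto
  next
    case (Suc i')
    then show ?thesis using "4.IH"[OF arc, of i' j'] "4.prems" j' by simp
  qed
qed auto

lemma vpt_mod: "vpt vs (i mod length vs) = vpt vs i"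
  by (simp add: vpt_def)

lemma vpt_length: "vpt vs (length vs) = vpt vs 0"
  by (simp add: vpt_def)

lemma edge_mod: "edge vs (i mod length vs) = edge vs i"
  unfolding edge_def by (metis mod_Suc_eq vpt_mod)

definition vertex_cycle :: "(int \<times> int) list \<Rightarrow> pt list" where
  "vertex_cycle vs = map (vpt vs) [0..<length vs] @ [vpt vs 0]"

lemma boundary_path_vertex_cycle: "boundary_path vs = polypath (vertex_cycle vs)"
  by (simp add: boundary_path_def vertex_cycle_def)

lemma length_vertex_cycle: "length (vertex_cycle vs) = Suc (length vs)"
  by (simp add: vertex_cycle_def)

lemma nth_vertex_cycle: "k \<le> length vs \<Longrightarrow> vertex_cycle vs ! k = vpt vs k"
  by (cases "k = length vs") (auto simp: vertex_cycle_def nth_append vpt_length)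

lemma boundary_path_loop:
  assumes "vs \<noteq> []"
  shows "pathstart (boundary_path vs) = vpt vs 0" "pathfinish (boundary_path vs) = vpt vs 0"
proof -
  have "vertex_cycle vs = vpt vs 0 # tl (vertex_cycle vs)"
    using assms nth_vertex_cycle[of 0 vs] length_vertex_cycle[of vs]
    by (metis Zero_not_Suc hd_conv_nth le0 length_0_conv list.collapse)
  then show "pathstart (boundary_path vs) = vpt vs 0"
    by (metis boundary_path_vertex_cycle pathstart_polypath)
  show "pathfinish (boundary_path vs) = vpt vs 0"
    by (simp add: boundary_path_vertex_cycle pathfinish_polypath vertex_cycle_def)
qed

lemma path_image_boundary_path:
  assumes "vs \<noteq> []"
  shows "path_image (boundary_path vs) = (\<Union>k < length vs. edge vs k)"
proof -
  have "length (vertex_cycle vs) \<ge> 2" using assms by (simp add: length_vertex_cycle Suc_le_eq)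
  then show ?thesis
    unfolding boundary_path_vertex_cycle
    by (subst path_image_polypath) (auto simp: length_vertex_cycle nth_vertex_cycle edge_def)
qed

lemma edges_meet_at_vertices:
  assumes P: "ortho_polygon vs" and ij: "i < j" "j < length vs"
  shows "edge vs i \<inter> edge vs j \<subseteq> {vpt vs (Suc i)} \<union> (if i = 0 then {vpt vs 0} else {})"
proof -
  let ?l = "vertex_cycle vs"
  have n4: "length vs \<ge> 4" using P by (simp add: ortho_polygon_def)
  then have "length ?l \<ge> 3" using length_vertex_cycle[of vs] by simp
  then obtain a b c rest where l: "?l = a # b # c # rest"
    by (cases ?l; cases "tl ?l"; cases "tl (tl ?l)") auto
  let ?r = "b # c # rest"
  have a: "a = vpt vs 0" using nth_vertex_cycle[of 0 vs] l by simp
  have r_nth: "k < length vs \<Longrightarrow> ?r ! k = vpt vs (Suc k)" for k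
    using nth_vertex_cycle[of "Suc k" vs] l by simp
  have r_length: "length ?r = length vs" using l length_vertex_cycle[of vs] by simp
  have "simple_path (linepath a b +++ polypath ?r)"
    using P l by (simp add: ortho_polygon_def boundary_path_vertex_cycle)
  moreover have "last ?l = vpt vs 0" by (simp add: vertex_cycle_def)
  then have "pathfinish (polypath ?r) = a" using l a by (simp add: pathfinish_polypath)
  ultimately have arc: "arc (polypath ?r)"
    and first: "closed_segment a b \<inter> path_image (polypath ?r) \<subseteq> {a, b}"
    using simple_path_join_loop_eq[of "polypath ?r" "linepath a b"] by (auto simp: pathstart_polypath)
  obtain j' where j': "j = Suc j'" using ij by (cases j) auto
  have ej: "edge vs j = closed_segment (?r ! j') (?r ! Suc j')"
    using r_nth[of j'] r_nth[of j] ij j' by (simp add: edge_def)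
  show ?thesis
  proof (cases i)
    case 0
    have "edge vs j \<subseteq> (\<Union>k < length ?r - 1. closed_segment (?r ! k) (?r ! Suc k))"
      unfolding ej by (rule UN_upper) (use r_length ij j' in simp)
    then have "edge vs j \<subseteq> path_image (polypath ?r)"
      by (simp add: path_image_polypath)
    moreover have b: "b = vpt vs (Suc 0)" using r_nth[of 0] n4 by fastforce
    then have "edge vs i = closed_segment a b" using 0 a by (simp add: edge_def)
    ultimately show ?thesis using first 0 a b by auto
  next
    case (Suc i')
    have "edge vs i = closed_segment (?r ! i') (?r ! Suc i')"
      using r_nth[of i'] r_nth[of i] ij Suc by (simp add: edge_def)
    then show ?thesis
      using polypath_arc_segments_meet_at_vertex[OF arc, of i' j'] ej r_nth[of i] r_length ij Suc j'
      by auto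
  qed
qed

lemma edge_inter_edge_is_vertex:
  assumes P: "ortho_polygon vs" and i: "i < length vs" and j: "j < length vs" "j \<noteq> i"
    and z: "z \<in> edge vs i" "z \<in> edge vs j"
  shows "z = vpt vs i \<or> z = vpt vs (Suc i)"
proof (cases "i < j")
  case True
  then show ?thesis using edges_meet_at_vertices[OF P True j(1)] z by (auto split: if_splits)
next
  case False
  then have "j < i" using j(2) by simp
  then show ?thesis
    using z(2)
  proof (induction "i - j" arbitrary: j rule: less_induct)
    case less
    have "z = vpt vs (Suc j) \<or> (j = 0 \<and> z = vpt vs 0)"
      using edges_meet_at_vertices[OF P less.prems(1) i] z(1) less.prems(2) by (auto split: if_splits)
    then show ?case
    proof
      assume zj: "z = vpt vs (Suc j)"
      show ?thesis
      proof (cases "Suc j = i")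
        case False
        then have "Suc j < i" using less.prems(1) by simp
        moreover have "z \<in> edge vs (Suc j)" using zj by (simp add: edge_def)
        ultimately show ?thesis using less.hyps[of "Suc j"] less.prems(1) by simp
      qed (use zj in simp)
    next
      assume "j = 0 \<and> z = vpt vs 0"
      moreover have "Suc (length vs - 1) = length vs" using i by simp
      ultimately have z0: "z = vpt vs (Suc (length vs - 1))" by (simp add: vpt_length)
      then have "z \<in> edge vs (length vs - 1)" by (simp add: edge_def)
      show ?thesis
      proof (cases "i = length vs - 1")
        case False
        then have "i < length vs - 1" "length vs - 1 < length vs" using i by simp_all
        then show ?thesis
          using edges_meet_at_vertices[OF P _, of i "length vs - 1"] z(1) \<open>z \<in> edge vs (length vs - 1)\<close>
            \<open>j = 0 \<and> z = vpt vs 0\<close> by (auto split: if_splits)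
      qed (use z0 in simp)
    qed
  qed
qed

lemma not_interior_region_if_on_edge:
  assumes "ortho_polygon vs" "k < length vs" "z \<in> edge vs k"
  shows "z \<notin> interior (region vs)"
proof -
  have "vs \<noteq> []" using assms(2) by auto
  then have "z \<in> path_image (boundary_path vs)"
    using assms(2,3) path_image_boundary_path by blast
  moreover have "simple_path (boundary_path vs)" using assms(1) by (simp add: ortho_polygon_def)
  ultimately show ?thesis
    using not_interior_region_if_on_simple_loop boundary_path_loop[OF \<open>vs \<noteq> []\<close>]
    by (simp add: region_def)
qed

lemma edges_in_trap_if_one_meets:
  assumes trapped: "\<And>j. j < length vs \<Longrightarrow> edge vs j \<inter> B \<noteq> {} \<Longrightarrow> edge vs j \<subseteq> K"
    and "K \<subseteq> B" and j0: "j0 < length vs" "edge vs j0 \<inter> B \<noteq> {}" and j: "j < length vs"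
  shows "edge vs j \<subseteq> K"
proof -
  have "edge vs ((j0 + k) mod length vs) \<subseteq> K" for k
  proof (induction k)
    case 0
    then show ?case using trapped j0 by simp
  next
    case (Suc k)
    let ?j = "(j0 + k) mod length vs"
    have "vpt vs (Suc ?j) \<in> K" using Suc.IH by (auto simp: edge_def)
    moreover have "vpt vs (Suc ?j) \<in> edge vs ((j0 + Suc k) mod length vs)"
      by (metis edge_mod mod_Suc_eq add_Suc_right ends_in_segment(1) edge_def)
    moreover have "(j0 + Suc k) mod length vs < length vs" by (rule mod_less_divisor) (use j in auto)
    ultimately show ?case using \<open>K \<subseteq> B\<close> trapped by blast
  qed
  from this[of "length vs - j0 + j"] show ?thesis using j0 j by simp
qed

lemma horiz_or_vert_edge: "ortho_polygon vs \<Longrightarrow> i < length vs \<Longrightarrow> horiz_edge vs i \<or> vert_edge vs i"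
  by (auto simp: ortho_polygon_def)

section \<open>Axis-parallel segments and boxes\<close>

lemma closed_segment_horizontal: "closed_segment (a, h) (b, h) = closed_segment a b \<times> {h::real}"
proof
  show "closed_segment (a, h) (b, h) \<subseteq> closed_segment a b \<times> {h}"
    using closed_segment_PairD by fastforce
  show "closed_segment a b \<times> {h} \<subseteq> closed_segment (a, h) (b, h)"
  proof
    fix z assume "z \<in> closed_segment a b \<times> {h}"
    then obtain u where "0 \<le> u" "u \<le> 1" "z = ((1 - u) *\<^sub>R a + u *\<^sub>R b, h)"
      unfolding closed_segment_def by auto
    then show "z \<in> closed_segment (a, h) (b, h)"
      unfolding closed_segment_def by (auto simp: algebra_simps intro!: exI[of _ u])
  qed
qed

lemma closed_segment_vertical: "closed_segment (p, a) (p, b) = {p::real} \<times> closed_segment a b"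
proof
  show "closed_segment (p, a) (p, b) \<subseteq> {p} \<times> closed_segment a b"
    using closed_segment_PairD by fastforce
  show "{p} \<times> closed_segment a b \<subseteq> closed_segment (p, a) (p, b)"
  proof
    fix z assume "z \<in> {p} \<times> closed_segment a b"
    then obtain u where "0 \<le> u" "u \<le> 1" "z = (p, (1 - u) *\<^sub>R a + u *\<^sub>R b)"
      unfolding closed_segment_def by auto
    then show "z \<in> closed_segment (p, a) (p, b)"
      unfolding closed_segment_def by (auto simp: algebra_simps intro!: exI[of _ u])
  qed
qed

lemma box_Pair_real:
  fixes a b c d :: real
  shows "box (a, c) (b, d) = {a<..<b} \<times> {c<..<d}"
  by (auto simp: box_def Basis_prod_def inner_prod_def)

lemma cbox_Pair_real:
  fixes a b c d :: real
  shows "cbox (a, c) (b, d) = {a..b} \<times> {c..d}"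
  by (simp add: cbox_Pair_eq)

lemma cbox_Pair_eq_imp_eq:
  assumes "a \<le> c" "b \<le> e" "cbox (a, b) (c, e) = (cbox (a', b') (c', e') :: pt set)"
  shows "a = a' \<and> b = b' \<and> c = c' \<and> e = e'"
proof -
  have "cbox (a, b) (c, e) \<noteq> ({} :: pt set)" using assms(1,2) by (simp add: cbox_Pair_real)
  then show ?thesis using assms(3) eq_cbox[of "(a, b)" "(c, e)" "(a', b')" "(c', e')"] by auto
qed

lemma horiz_edge_eq:
  "horiz_edge vs i \<Longrightarrow> edge vs i = closed_segment (fst (vpt vs i)) (fst (vpt vs (Suc i))) \<times> {snd (vpt vs i)}"
  unfolding edge_def horiz_edge_def
  by (metis closed_segment_horizontal prod.collapse)

lemma vert_edge_eq:
  "vert_edge vs i \<Longrightarrow> edge vs i = {fst (vpt vs i)} \<times> closed_segment (snd (vpt vs i)) (snd (vpt vs (Suc i)))"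
  unfolding edge_def vert_edge_def
  by (metis closed_segment_vertical prod.collapse)

lemma convex_real_between:
  fixes I :: "real set"
  assumes "convex I" "u \<in> I" "v \<in> I" "min u v \<le> t" "t \<le> max u v"
  shows "t \<in> I"
proof -
  have "is_interval I" using assms(1) by (simp add: is_interval_convex_1)
  moreover have "u \<le> t \<and> t \<le> v \<or> v \<le> t \<and> t \<le> u"
    using assms(4,5) by (cases "u \<le> v") (simp_all add: min_def max_def)
  ultimately show ?thesis using assms(2,3) unfolding is_interval_1 by blast
qed

lemma convex_real_subset_if_avoids_sides:
  fixes I :: "real set"
  assumes I: "convex I" "p0 \<in> I" "l < p0" "p0 < r"
    and avoids: "I \<inter> {l<..<l'} = {}" "I \<inter> {r'<..<r} = {}" and "l < l'" "r' < r"
  shows "I \<subseteq> {l'..r'}"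
proof
  fix p assume "p \<in> I"
  have "p0 \<notin> {l<..<l'}" "p0 \<notin> {r'<..<r}" using I(2) avoids by blast+
  then have "l' \<le> p0" "p0 \<le> r'" using I(3,4) by auto
  show "p \<in> {l'..r'}"
  proof (rule ccontr)
    assume "p \<notin> {l'..r'}"
    then consider "p < l'" | "r' < p" by fastforce
    then show False
    proof cases
      case 1
      define t where "t = max p ((l + l') / 2)"
      have "t \<in> I" using 1 \<open>l' \<le> p0\<close> \<open>l < l'\<close>
        by (intro convex_real_between[OF I(1) \<open>p \<in> I\<close> I(2)]) (auto simp: t_def)
      moreover have "t \<in> {l<..<l'}" using 1 \<open>l < l'\<close> by (auto simp: t_def max_def)
      ultimately show False using avoids(1) by blast
    next
      case 2
      define t where "t = min p ((r' + r) / 2)"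
      have "t \<in> I" using 2 \<open>p0 \<le> r'\<close> \<open>r' < r\<close>
        by (intro convex_real_between[OF I(1) \<open>p \<in> I\<close> I(2)]) (auto simp: t_def)
      moreover have "t \<in> {r'<..<r}" using 2 \<open>r' < r\<close> by (auto simp: t_def min_def)
      ultimately show False using avoids(2) by blast
    qed
  qed
qed

lemma convex_real_subset_if_avoids_ends:
  fixes I :: "real set"
  assumes I: "convex I" "h0 \<in> I" "lo < h0" "h0 < hi" and "lo \<notin> I" "hi \<notin> I"
  shows "I \<subseteq> {lo<..<hi}"
proof
  fix h assume "h \<in> I"
  show "h \<in> {lo<..<hi}"
  proof (rule ccontr)
    assume "h \<notin> {lo<..<hi}"
    then have "lo \<in> I \<or> hi \<in> I"
      using convex_real_between[OF I(1) \<open>h \<in> I\<close> I(2)] I(3,4) by (cases "h \<le> lo") auto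
    then show False using assms(5,6) by blast
  qed
qed

lemma horiz_edge_inner_point_not_on_other_edge:
  assumes P: "ortho_polygon vs" and i: "i < length vs" "horiz_edge vs i"
    and pq: "(p, h) \<in> edge vs i" "(q, h) \<in> edge vs i" "p < t" "t < q"
    and j: "j < length vs" "j \<noteq> i"
  shows "(t, h) \<notin> edge vs j"
proof
  assume "(t, h) \<in> edge vs j"
  define A B where "A = fst (vpt vs i)" and "B = fst (vpt vs (Suc i))"
  have E: "edge vs i = closed_segment A B \<times> {snd (vpt vs i)}"
    using horiz_edge_eq[OF i(2)] by (simp add: A_def B_def)
  then have AB: "p \<in> closed_segment A B" "q \<in> closed_segment A B" "snd (vpt vs i) = h" using pq(1,2) by auto
  then have "t \<in> closed_segment A B"
    using pq(3,4) convex_real_between[OF convex_closed_segment AB(1,2), of t] by simp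
  then have "(t, h) \<in> edge vs i" using E AB(3) by simp
  then have "(t, h) = vpt vs i \<or> (t, h) = vpt vs (Suc i)"
    using edge_inter_edge_is_vertex[OF P i(1) j] \<open>(t, h) \<in> edge vs j\<close> by blast
  then have "t = A \<or> t = B" unfolding A_def B_def by (metis fst_conv)
  then show False using AB(1,2) pq(3,4) by (auto simp: closed_segment_eq_real_ivl split: if_splits)
qed

lemma strip_cbox:
  assumes "strip vs (cbox (a, b) (c, e))"
  shows "a < c" "b < e" "cbox (a, b) (c, e) \<subseteq> region vs"
proof -
  have cand: "strip_candidate vs (cbox (a, b) (c, e))" using assms by (simp add: strip_def)
  then obtain a' b' c' e' where "a' < c'" "b' < e'" "cbox (a, b) (c, e) = cbox (a', b') (c', e')"
    unfolding strip_candidate_def by blast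
  moreover from this have "cbox (a', b') (c', e') \<noteq> ({} :: pt set)" by (simp add: cbox_Pair_real)
  ultimately show "a < c" "b < e" using eq_cbox[of "(a, b)" "(c, e)" "(a', b')" "(c', e')"] by auto
  show "cbox (a, b) (c, e) \<subseteq> region vs" using cand by (simp add: strip_candidate_def)
qed

lemma horiz_edge_through_corner:
  assumes i: "horiz_edge vs i" and d: "d > 0"
    and overlap: "seg_overlap (closed_segment (x, h) (x + d, h)) (edge vs i)"
    and corner: "(x + d, h) \<in> edge vs i" and far: "(c, e) \<in> edge vs i"
  shows "e = h" "\<exists>x1 < x + d. closed_segment (x1, h) (c, h) \<subseteq> edge vs i"
proof -
  have E: "edge vs i = closed_segment (fst (vpt vs i)) (fst (vpt vs (Suc i))) \<times> {h}"
    using horiz_edge_eq[OF i] corner by auto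
  then show "e = h" using far by simp
  obtain p q where "p \<noteq> q" and pq: "p \<in> closed_segment (x, h) (x + d, h) \<inter> edge vs i" "q \<in> closed_segment (x, h) (x + d, h) \<inter> edge vs i"
    using overlap unfolding seg_overlap_def by blast
  then have "fst p \<noteq> x + d \<or> fst q \<noteq> x + d" by (auto simp: closed_segment_horizontal prod_eq_iff)
  then obtain w where w: "w \<in> closed_segment (x, h) (x + d, h) \<inter> edge vs i" "fst w \<noteq> x + d"
    using pq by blast
  then have "fst w < x + d" "(fst w, h) \<in> edge vs i"
    using d by (auto simp: closed_segment_horizontal closed_segment_eq_real_ivl)
  moreover have "closed_segment (fst w, h) (c, h) \<subseteq> edge vs i"
    using closed_segment_subset[OF \<open>(fst w, h) \<in> edge vs i\<close>] far \<open>e = h\<close>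
    by (simp add: edge_def convex_closed_segment)
  ultimately show "\<exists>x1 < x + d. closed_segment (x1, h) (c, h) \<subseteq> edge vs i" by blast
qed

lemma interior_sq_meets_open:
  assumes "s > 0" "z \<in> sq a b s" "open W" "z \<in> W"
  shows "interior (sq a b s) \<inter> W \<noteq> {}"
proof -
  have "(a + s / 2, b + s / 2) \<in> box (a, b) (a + s, b + s)" using assms(1) by (simp add: box_Pair_real)
  then have "closure (interior (sq a b s)) = sq a b s" unfolding sq_def by (metis closure_box empty_iff interior_cbox)
  then show ?thesis using assms(2-4) open_Int_closure_eq_empty[OF assms(3)] by blast
qed

lemma Inf_fst_sq: "s \<ge> 0 \<Longrightarrow> Inf (fst ` sq a b s) = a"
proof -
  assume "s \<ge> 0"
  then have "fst ` sq a b s = {a..a + s}" unfolding sq_def cbox_Pair_real by force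
  then show ?thesis using \<open>s \<ge> 0\<close> by simp
qed

lemma edge_line_not_through_square:
  assumes P: "ortho_polygon vs" "i < length vs" and Q: "sq a b s \<subseteq> region vs"
    and line: "\<And>t. l \<le> t \<Longrightarrow> t \<le> r \<Longrightarrow> (t, h) \<in> edge vs i" and overlap: "max a l < min (a + s) r"
  shows "h \<le> b \<or> b + s \<le> h"
proof (rule ccontr)
  assume "\<not> (h \<le> b \<or> b + s \<le> h)"
  define t where "t = (max a l + min (a + s) r) / 2"
  have "(t, h) \<in> box (a, b) (a + s, b + s)"
    using overlap \<open>\<not> (h \<le> b \<or> b + s \<le> h)\<close> by (auto simp: box_Pair_real t_def)
  then have "(t, h) \<in> interior (region vs)" using interior_mono[OF Q] by (auto simp: sq_def)
  moreover have "(t, h) \<in> edge vs i" using overlap by (intro line) (auto simp: t_def)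
  ultimately show False using not_interior_region_if_on_edge[OF P] by blast
qed

section \<open>Extractions of rec-packs\<close>

lemma ext_horizontal:
  assumes t: "t > 0" and k: "k \<ge> 1"
  shows "ext (cbox (a, b) (a + real k * t, b + t)) = (\<lambda>i. sq (a + real i * t) b t) ` {..<k}"
proof
  show "(\<lambda>i. sq (a + real i * t) b t) ` {..<k} \<subseteq> ext (cbox (a, b) (a + real k * t, b + t))"
    unfolding ext_def using t k by blast
  have le: "a \<le> a + real k * t" "b \<le> b + t" using t k by auto
  show "ext (cbox (a, b) (a + real k * t, b + t)) \<subseteq> (\<lambda>i. sq (a + real i * t) b t) ` {..<k}"
  proof
    fix Q assume "Q \<in> ext (cbox (a, b) (a + real k * t, b + t))"
    then obtain a' b' t' k' i where t': "t' > 0" and i: "(i::nat) < k'"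
      and cases: "(cbox (a, b) (a + real k * t, b + t) = cbox (a', b') (a' + real k' * t', b' + t')
                     \<and> Q = sq (a' + real i * t') b' t')
                \<or> (cbox (a, b) (a + real k * t, b + t) = cbox (a', b') (a' + t', b' + real k' * t')
                     \<and> Q = sq a' (b' + real i * t') t')"
      unfolding ext_def by blast
    from cases show "Q \<in> (\<lambda>i. sq (a + real i * t) b t) ` {..<k}"
    proof
      assume h: "cbox (a, b) (a + real k * t, b + t) = cbox (a', b') (a' + real k' * t', b' + t')
                  \<and> Q = sq (a' + real i * t') b' t'"
      then have "a = a'" "b = b'" "t = t'" "real k * t = real k' * t'"
        using cbox_Pair_eq_imp_eq[OF le h[THEN conjunct1]] by auto
      then show ?thesis using h i t by auto
    next
      assume h: "cbox (a, b) (a + real k * t, b + t) = cbox (a', b') (a' + t', b' + real k' * t')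
                  \<and> Q = sq a' (b' + real i * t') t'"
      then have "a = a'" "b = b'" and tt: "t' = real k * t" "t = real k' * t'"
        using cbox_Pair_eq_imp_eq[OF le h[THEN conjunct1]] by auto
      \<comment> \<open>a horizontal and a vertical description of the same box force a single square\<close>
      have "t = real k' * (real k * t)" using tt(2) unfolding tt(1) .
      then have "(real k' * real k - 1) * t = 0" by algebra
      then have "real (k' * k) = real 1" using t by simp
      then have "k' * k = 1" by (simp only: of_nat_eq_iff)
      then have "k = 1" "i = 0" "t' = t" using i tt(1) by auto
      then show ?thesis using h \<open>a = a'\<close> \<open>b = b'\<close> by auto
    qed
  qed
qed

lemma ext_sq: "s > 0 \<Longrightarrow> ext (sq a b s) = {sq a b s}"
  using ext_horizontal[of s 1 a b] by (simp add: sq_def lessThan_Suc)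

lemma ext_valid_square: "valid_square P Q \<Longrightarrow> ext Q = {Q}"
  unfolding valid_square_def using ext_sq by blast

lemma square_in_ext:
  assumes "Q \<in> ext R"
  shows "Q \<subseteq> R" "\<exists>a b t. t > 0 \<and> Q = sq a b t"
proof -
  obtain a b t k i where t: "t > 0" and i: "(i::nat) < k"
    and cases: "(R = cbox (a, b) (a + real k * t, b + t) \<and> Q = sq (a + real i * t) b t)
              \<or> (R = cbox (a, b) (a + t, b + real k * t) \<and> Q = sq a (b + real i * t) t)"
    using assms unfolding ext_def by blast
  have "real i * t + t \<le> real k * t"
    using i t mult_right_mono[of "real (Suc i)" "real k" t] by (simp add: algebra_simps)
  moreover have "0 \<le> real i * t" using t by simp
  ultimately show "Q \<subseteq> R" using cases by (auto simp: sq_def cbox_Pair_real)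
  show "\<exists>a b t. t > 0 \<and> Q = sq a b t" using cases t by blast
qed

lemma valid_square_in_ext: "recpack P R \<Longrightarrow> Q \<in> ext R \<Longrightarrow> valid_square P Q"
  unfolding recpack_def valid_square_def using square_in_ext by blast

lemma recpack_valid_square:
  assumes "valid_square P Q"
  shows "recpack P Q"
proof -
  obtain a b s where "s > 0" "Q = sq a b s" "Q \<subseteq> P" using assms unfolding valid_square_def by blast
  then show ?thesis unfolding recpack_def sq_def
    by (intro conjI exI[of _ a] exI[of _ b] exI[of _ s] exI[of _ "1::nat"]) auto
qed

lemma Union_ext_horizontal:
  assumes t: "t > 0" and k: "k \<ge> 1"
  shows "\<Union>(ext (cbox (a, b) (a + real k * t, b + t))) = cbox (a, b) (a + real k * t, b + t)"
proof
  show "\<Union>(ext (cbox (a, b) (a + real k * t, b + t))) \<subseteq> cbox (a, b) (a + real k * t, b + t)"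
    using square_in_ext(1) by blast
  show "cbox (a, b) (a + real k * t, b + t) \<subseteq> \<Union>(ext (cbox (a, b) (a + real k * t, b + t)))"
  proof
    fix z assume z: "z \<in> cbox (a, b) (a + real k * t, b + t)"
    define r where "r = (fst z - a) / t"
    define i where "i = min (k - 1) (nat \<lfloor>r\<rfloor>)"
    have r: "0 \<le> r" "r \<le> real k"
      using z t by (auto simp: r_def cbox_Pair_real divide_le_eq mult.commute)
    have "real i \<le> r \<and> r \<le> real i + 1"
    proof (cases "r \<ge> real k - 1")
      case True
      then have "int (k - 1) \<le> \<lfloor>r\<rfloor>" using k by (simp add: le_floor_iff of_nat_diff)
      then have "i = k - 1" by (simp add: i_def)
      then show ?thesis using True r k by (simp add: of_nat_diff)
    next
      case False
      then have "\<lfloor>r\<rfloor> < int (k - 1)" using k by (simp add: floor_less_iff of_nat_diff)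
      then have "real i = of_int \<lfloor>r\<rfloor>" using r(1) by (simp add: i_def)
      then show ?thesis by linarith
    qed
    then have "real i \<le> (fst z - a) / t" "(fst z - a) / t \<le> real i + 1" by (simp_all add: r_def)
    then have "real i * t \<le> fst z - a" "fst z - a \<le> real i * t + t"
      using t by (simp_all add: field_simps)
    then have "z \<in> sq (a + real i * t) b t" using z by (auto simp: sq_def cbox_Pair_real)
    moreover have "i < k" using k by (simp add: i_def)
    ultimately show "z \<in> \<Union>(ext (cbox (a, b) (a + real k * t, b + t)))"
      using ext_horizontal[OF t k] by blast
  qed
qed

lemma overlaps_ext: "Q \<in> ext R \<Longrightarrow> overlaps R Q"
proof -
  assume Q: "Q \<in> ext R"
  then obtain a b t where "t > 0" "Q = sq a b t" using square_in_ext(2) by blast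
  then have "(a + t / 2, b + t / 2) \<in> interior Q" by (simp add: sq_def box_Pair_real)
  then show ?thesis using interior_mono[OF square_in_ext(1)[OF Q]] unfolding overlaps_def by blast
qed

lemma overlaps_mono: "overlaps A B \<Longrightarrow> B \<subseteq> B' \<Longrightarrow> overlaps A B'"
  unfolding overlaps_def using interior_mono by blast

section \<open>Minimum coverings: exchange and counting\<close>

lemma min_square_cover_exchange:
  assumes U: "min_square_cover P U" and D: "D \<subseteq> U"
    and E: "finite E" "\<forall>Q\<in>E. valid_square P Q" "card E \<le> card D"
    and cover: "\<Union>D \<subseteq> \<Union>E \<union> \<Union>(U - D)"
  shows "min_square_cover P (U - D \<union> E)"
proof -
  have fin: "finite U" and valid: "\<forall>Q\<in>U. valid_square P Q" and union: "\<Union>U = P"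
    and min: "\<And>V. finite V \<Longrightarrow> \<forall>Q\<in>V. valid_square P Q \<Longrightarrow> \<Union>V = P \<Longrightarrow> card U \<le> card V"
    using U unfolding min_square_cover_def by blast+
  have "\<Union>(U - D \<union> E) = P"
  proof
    show "\<Union>(U - D \<union> E) \<subseteq> P" using valid E(2) by (auto simp: valid_square_def)
    show "P \<subseteq> \<Union>(U - D \<union> E)" using union cover by blast
  qed
  moreover have "card (U - D \<union> E) \<le> card U"
  proof -
    have "card (U - D \<union> E) \<le> card (U - D) + card E" by (rule card_Un_le)
    also have "\<dots> = card U - card D + card E"
      using card_Diff_subset[OF finite_subset[OF D fin] D] by simp
    finally show ?thesis using E(3) card_mono[OF fin D] by linarith
  qed
  moreover have "\<forall>Q\<in>U - D \<union> E. valid_square P Q" using valid E(2) by blast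
  ultimately show ?thesis
    unfolding min_square_cover_def using fin E(1) min by (meson finite_Diff finite_UnI order_trans)
qed

text \<open>The rec-packs of a covering that lose a square to D are broken up into their remaining squares.\<close>
definition split_off :: "pt set set \<Rightarrow> pt set set \<Rightarrow> pt set set" where
  "split_off Rs D = {A \<in> Rs. ext A \<inter> D = {}}
     \<union> {Q \<in> (\<Union>A\<in>Rs. ext A) - D. \<exists>A\<in>Rs. Q \<in> ext A \<and> ext A \<inter> D \<noteq> {}}"

lemma valid_square_covering:
  assumes "min_covering P Rs" "Q \<in> (\<Union>A\<in>Rs. ext A)"
  shows "valid_square P Q"
proof -
  have "min_square_cover P (\<Union>A\<in>Rs. ext A)" using assms(1) by (simp add: min_covering_def)
  then show ?thesis using assms(2) unfolding min_square_cover_def by blast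
qed

lemma ext_covering_square: "min_covering P Rs \<Longrightarrow> Q \<in> (\<Union>A\<in>Rs. ext A) \<Longrightarrow> ext Q = {Q}"
  using valid_square_covering ext_valid_square by blast

lemma Union_ext_split_off:
  assumes "min_covering P Rs"
  shows "(\<Union>A\<in>split_off Rs D. ext A) = (\<Union>A\<in>Rs. ext A) - D"
proof
  show "(\<Union>A\<in>split_off Rs D. ext A) \<subseteq> (\<Union>A\<in>Rs. ext A) - D"
    using ext_covering_square[OF assms] unfolding split_off_def by fastforce
  show "(\<Union>A\<in>Rs. ext A) - D \<subseteq> (\<Union>A\<in>split_off Rs D. ext A)"
  proof
    fix Q assume "Q \<in> (\<Union>A\<in>Rs. ext A) - D"
    then obtain A where A: "A \<in> Rs" "Q \<in> ext A" "Q \<notin> D" by blast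
    show "Q \<in> (\<Union>A\<in>split_off Rs D. ext A)"
    proof (cases "ext A \<inter> D = {}")
      case True
      then show ?thesis using A unfolding split_off_def by blast
    next
      case False
      then have "Q \<in> split_off Rs D" using A unfolding split_off_def by blast
      then show ?thesis using ext_covering_square[OF assms, of Q] A by blast
    qed
  qed
qed

lemma recpack_split_off:
  assumes "min_covering P Rs" "A \<in> split_off Rs D"
  shows "recpack P A"
proof (cases "A \<in> Rs")
  case True
  then show ?thesis using assms(1) by (simp add: min_covering_def)
next
  case False
  then have "A \<in> (\<Union>A\<in>Rs. ext A)" using assms(2) by (simp add: split_off_def)
  then show ?thesis using recpack_valid_square valid_square_covering[OF assms(1)] by blast
qed

lemma ext_disjoint_split_off:
  assumes mc: "min_covering P Rs" and AB: "A \<in> split_off Rs D" "B \<in> split_off Rs D" "A \<noteq> B"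
  shows "ext A \<inter> ext B = {}"
proof (rule ccontr)
  assume "ext A \<inter> ext B \<noteq> {}"
  then obtain Q where Q: "Q \<in> ext A" "Q \<in> ext B" by blast
  have disjoint: "\<And>A B. A \<in> Rs \<Longrightarrow> B \<in> Rs \<Longrightarrow> A \<noteq> B \<Longrightarrow> ext A \<inter> ext B = {}"
    using mc unfolding min_covering_def by blast
  \<comment> \<open>each square of the covering lies in the extraction of a unique owner C; A and B both equal
    either C (if C is kept) or Q itself (if C is broken up)\<close>
  have owner: "(X = C \<and> ext C \<inter> D = {}) \<or> (X = Q \<and> ext C \<inter> D \<noteq> {})"
    if X: "X \<in> split_off Rs D" "Q \<in> ext X" and C: "C \<in> Rs" "Q \<in> ext C" for X C
  proof (cases "X \<in> Rs \<and> ext X \<inter> D = {}")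
    case True
    then show ?thesis using disjoint C X(2) by blast
  next
    case False
    then obtain A' where "X \<in> (\<Union>A\<in>Rs. ext A)" "A' \<in> Rs" "X \<in> ext A'" "ext A' \<inter> D \<noteq> {}"
      using X(1) unfolding split_off_def by blast
    moreover from this have "X = Q" using ext_covering_square[OF mc] X(2) by blast
    ultimately show ?thesis using disjoint C by blast
  qed
  have "Q \<in> (\<Union>A\<in>split_off Rs D. ext A)" using Q(1) AB(1) by blast
  then obtain C where C: "C \<in> Rs" "Q \<in> ext C" unfolding Union_ext_split_off[OF mc] by blast
  show False using owner[OF AB(1) Q(1) C] owner[OF AB(2) Q(2) C] AB(3) by blast
qed

lemma min_covering_exchange:
  assumes mc: "min_covering P Rs"
    and D: "D \<subseteq> (\<Union>A\<in>Rs. ext A)"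
    and R: "recpack P R" "finite (ext R)" "card (ext R) \<le> card D"
    and cover: "\<Union>D \<subseteq> \<Union>(ext R) \<union> \<Union>((\<Union>A\<in>Rs. ext A) - D)"
    and shared: "(\<Union>A\<in>Rs. ext A) \<inter> ext R \<subseteq> D"
  shows "min_covering P (insert R (split_off Rs D))"
proof -
  have union: "(\<Union>A\<in>insert R (split_off Rs D). ext A) = (\<Union>A\<in>Rs. ext A) - D \<union> ext R"
    using Union_ext_split_off[OF mc] by auto
  have "min_square_cover P ((\<Union>A\<in>Rs. ext A) - D \<union> ext R)"
    using mc D R cover valid_square_in_ext[OF R(1)] unfolding min_covering_def
    by (intro min_square_cover_exchange) auto
  moreover have "ext A \<inter> ext R = {}" if "A \<in> split_off Rs D" for A
    using that shared Union_ext_split_off[OF mc, of D] by blast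
  ultimately show ?thesis
    unfolding min_covering_def union
    using R(1) recpack_split_off[OF mc] ext_disjoint_split_off[OF mc] by blast
qed

lemma spread_points:
  fixes d l m :: real
  assumes d: "0 < d" and n: "1 \<le> n" and room: "l + real n * d < m"
  obtains t where "\<And>k. k < n \<Longrightarrow> l + d < t k \<and> t k < m"
    "\<And>k j. k < n \<Longrightarrow> j < n \<Longrightarrow> k \<noteq> j \<Longrightarrow> d < \<bar>t k - t j\<bar>"
proof -
  define \<delta> where "\<delta> = (m - l) / real n"
  have \<delta>: "d < \<delta>" "l + real n * \<delta> = m" using room n by (simp_all add: \<delta>_def field_simps)
  \<comment> \<open>t k is the midpoint of [l + k \<delta> + d, l + (k + 1) \<delta>]\<close>
  define t where "t k = l + real k * \<delta> + (\<delta> + d) / 2" for k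
  show ?thesis
  proof (rule that)
    fix k assume "k < n"
    then have "real k * \<delta> + \<delta> \<le> real n * \<delta>"
      using \<delta>(1) d mult_right_mono[of "real k + 1" "real n" \<delta>] by (simp add: algebra_simps)
    moreover have "0 \<le> real k * \<delta>" using \<delta>(1) d by simp
    ultimately show "l + d < t k \<and> t k < m" using \<delta> unfolding t_def by argo
  next
    fix k j :: nat assume "k \<noteq> j"
    then have "1 \<le> \<bar>real k - real j\<bar>" by linarith
    then have "\<delta> \<le> \<bar>real k - real j\<bar> * \<delta>" using \<delta>(1) d by (simp add: mult_le_cancel_right1)
    moreover have "\<bar>t k - t j\<bar> = \<bar>real k - real j\<bar> * \<delta>"
      using \<delta>(1) d by (simp add: t_def abs_mult flip: left_diff_distrib)
    ultimately show "d < \<bar>t k - t j\<bar>" using \<delta>(1) by linarith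
  qed
qed

lemma card_ge_if_covers_spread_points:
  fixes f :: "'a \<Rightarrow> real" and p :: "nat \<Rightarrow> 'a"
  assumes "finite F"
    and covered: "\<And>k. k < n \<Longrightarrow> \<exists>Q\<in>F. p k \<in> Q"
    and narrow: "\<And>Q u v. Q \<in> F \<Longrightarrow> u \<in> Q \<Longrightarrow> v \<in> Q \<Longrightarrow> \<bar>f u - f v\<bar> \<le> d"
    and spread: "\<And>k l. k < n \<Longrightarrow> l < n \<Longrightarrow> k \<noteq> l \<Longrightarrow> \<bar>f (p k) - f (p l)\<bar> > d"
  shows "n \<le> card F"
proof -
  define Q where "Q k = (SOME Q. Q \<in> F \<and> p k \<in> Q)" for k
  have Q: "Q k \<in> F \<and> p k \<in> Q k" if "k < n" for k
    unfolding Q_def using covered[OF that] someI_ex[of "\<lambda>Q. Q \<in> F \<and> p k \<in> Q"] by blast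
  have "inj_on Q {..<n}"
  proof (rule inj_onI)
    fix k l assume kl: "k \<in> {..<n}" "l \<in> {..<n}" and "Q k = Q l"
    show "k = l"
    proof (rule ccontr)
      assume "k \<noteq> l"
      have "Q k \<in> F" "p k \<in> Q k" "p l \<in> Q k" using Q kl \<open>Q k = Q l\<close> by auto
      then show False using narrow spread[OF _ _ \<open>k \<noteq> l\<close>] kl by fastforce
    qed
  qed
  then show ?thesis using card_inj_on_le[of Q "{..<n}" F] Q assms(1) by auto
qed

section \<open>The band between the two edges\<close>

text \<open>
  S = sq x y d, the strip spans [a, c] \<times> [y, y + d], and the top edge i1 (bottom edge i2)
  contains the segment from x1 (x2) to c at height y + d (y); x1, x2 < x + d says that these
  edges reach strictly past the right corners of S.
\<close>
locale square_strip_band =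
  fixes vs :: "(int \<times> int) list" and x y d a c x1 x2 :: real and i1 i2 :: nat
  assumes polygon: "ortho_polygon vs"
    and d_pos: "0 < d"
    and square_in_region: "sq x y d \<subseteq> region vs"
    and strip_in_region: "cbox (a, y) (c, y + d) \<subseteq> region vs"
    and a_less_c: "a < c"
    and square_left_of_c: "x + d < c"
    and top_edge: "i1 < length vs" "horiz_edge vs i1" "closed_segment (x1, y + d) (c, y + d) \<subseteq> edge vs i1"
      "x1 < x + d"
    and bottom_edge: "i2 < length vs" "horiz_edge vs i2" "closed_segment (x2, y) (c, y) \<subseteq> edge vs i2"
      "x2 < x + d"
begin

lemma on_top_edge: "x1 \<le> t \<Longrightarrow> t \<le> c \<Longrightarrow> (t, y + d) \<in> edge vs i1"
  using top_edge(3) by (auto simp: closed_segment_horizontal closed_segment_eq_real_ivl)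

lemma on_bottom_edge: "x2 \<le> t \<Longrightarrow> t \<le> c \<Longrightarrow> (t, y) \<in> edge vs i2"
  using bottom_edge(3) by (auto simp: closed_segment_horizontal closed_segment_eq_real_ivl)

lemma top_line_only_on_top_edge:
  "x1 < t \<Longrightarrow> t < c \<Longrightarrow> j < length vs \<Longrightarrow> j \<noteq> i1 \<Longrightarrow> (t, y + d) \<notin> edge vs j"
  using horiz_edge_inner_point_not_on_other_edge[OF polygon top_edge(1,2) on_top_edge on_top_edge] square_left_of_c top_edge(4)
  by auto

lemma bottom_line_only_on_bottom_edge:
  "x2 < t \<Longrightarrow> t < c \<Longrightarrow> j < length vs \<Longrightarrow> j \<noteq> i2 \<Longrightarrow> (t, y) \<notin> edge vs j"
  using horiz_edge_inner_point_not_on_other_edge[OF polygon bottom_edge(1,2) on_bottom_edge on_bottom_edge]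
    square_left_of_c bottom_edge(4)
  by auto

lemma edge_avoids_open_square: "k < length vs \<Longrightarrow> edge vs k \<inter> box (x, y) (x + d, y + d) = {}"
  using interior_mono[OF square_in_region] not_interior_region_if_on_edge[OF polygon] by (auto simp: sq_def)

lemma edge_avoids_open_strip: "k < length vs \<Longrightarrow> edge vs k \<inter> box (a, y) (c, y + d) = {}"
  using interior_mono[OF strip_in_region] not_interior_region_if_on_edge[OF polygon] by auto

lemma edge_meeting_band_trapped:
  assumes j: "j < length vs" and meets: "edge vs j \<inter> box (x, y) (c, y + d) \<noteq> {}"
  shows "edge vs j \<subseteq> {x + d..a} \<times> {y<..<y + d}"
proof -
  obtain p0 h0 where z0: "(p0, h0) \<in> edge vs j" "x < p0" "p0 < c" "y < h0" "h0 < y + d"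
    using meets by (auto simp: box_Pair_real)
  consider "horiz_edge vs j" | "vert_edge vs j" using horiz_or_vert_edge[OF polygon j] by blast
  then show ?thesis
  proof cases
    case 1
    define I where "I = closed_segment (fst (vpt vs j)) (fst (vpt vs (Suc j)))"
    have E: "edge vs j = I \<times> {h0}" using horiz_edge_eq[OF 1] z0(1) by (auto simp: I_def)
    have "I \<inter> {x<..<x + d} = {}" "I \<inter> {a<..<c} = {}"
      using edge_avoids_open_square[OF j] edge_avoids_open_strip[OF j] z0(4,5) by (auto simp: E box_Pair_real)
    then have "I \<subseteq> {x + d..a}"
      using z0 d_pos a_less_c by (intro convex_real_subset_if_avoids_sides[of I p0 x c]) (auto simp: E I_def)
    then show ?thesis using E z0(4,5) by auto
  next
    case 2
    define J where "J = closed_segment (snd (vpt vs j)) (snd (vpt vs (Suc j)))"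
    have E: "edge vs j = {p0} \<times> J" using vert_edge_eq[OF 2] z0(1) by (auto simp: J_def)
    have "p0 \<notin> {x<..<x + d}" "p0 \<notin> {a<..<c}"
      using edge_avoids_open_square[OF j] edge_avoids_open_strip[OF j] z0 by (auto simp: box_Pair_real)
    then have p0: "x + d \<le> p0" "p0 \<le> a" using z0(2,3) by auto
    have "j \<noteq> i1" "j \<noteq> i2" using 2 top_edge(2) bottom_edge(2) by (auto simp: horiz_edge_def vert_edge_def)
    then have "y + d \<notin> J" "y \<notin> J"
      using top_line_only_on_top_edge[of p0 j] bottom_line_only_on_bottom_edge[of p0 j] j p0 a_less_c
        top_edge(4) bottom_edge(4) by (auto simp: E)
    then have "J \<subseteq> {y<..<y + d}"
      using z0 by (intro convex_real_subset_if_avoids_ends[of J h0]) (auto simp: E J_def)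
    then show ?thesis using E p0 by auto
  qed
qed

lemma edge_avoids_band: "k < length vs \<Longrightarrow> edge vs k \<inter> box (x, y) (c, y + d) = {}"
proof (rule ccontr)
  \<comment> \<open>along the boundary cycle, the top edge would be trapped too\<close>
  assume k: "k < length vs" and "edge vs k \<inter> box (x, y) (c, y + d) \<noteq> {}"
  moreover have "{x + d..a} \<times> {y<..<y + d} \<subseteq> box (x, y) (c, y + d)"
    using d_pos a_less_c by (auto simp: box_Pair_real)
  ultimately have "edge vs i1 \<subseteq> {x + d..a} \<times> {y<..<y + d}"
    using edges_in_trap_if_one_meets[OF edge_meeting_band_trapped] top_edge(1) by blast
  moreover have "(c, y + d) \<in> edge vs i1" using on_top_edge top_edge(4) square_left_of_c by simp
  ultimately show False by auto
qed

lemma closed_band_in_region: "cbox (x, y) (c, y + d) \<subseteq> region vs"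
proof -
  let ?C = "path_image (boundary_path vs)" and ?z = "(x + d / 2, y + d / 2)"
  have "vs \<noteq> []" using top_edge(1) by auto
  have "closed ?C"
    using polygon by (simp add: ortho_polygon_def closed_path_image simple_path_imp_path)
  moreover have avoids: "box (x, y) (c, y + d) \<inter> ?C = {}"
    using edge_avoids_band path_image_boundary_path[OF \<open>vs \<noteq> []\<close>] by blast
  moreover have z: "?z \<in> box (x, y) (c, y + d)" using d_pos square_left_of_c by (simp add: box_Pair_real)
  moreover have "?z \<in> inside ?C"
  proof -
    have "?z \<in> region vs" using square_in_region d_pos by (auto simp: sq_def cbox_Pair_real)
    then show ?thesis using avoids z by (auto simp: region_def)
  qed
  ultimately have "closure (box (x, y) (c, y + d)) \<subseteq> region vs"
    unfolding region_def by (intro closure_subset_inside_if_connected) (auto intro: convex_connected)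
  moreover have "closure (box (x, y) (c, y + d)) = cbox (x, y) (c, y + d)" using z by (intro closure_box) blast
  ultimately show ?thesis by simp
qed

lemma square_meeting_band_confined:
  assumes Q: "s > 0" "sq a' b' s \<subseteq> region vs"
    and z: "z \<in> sq a' b' s" "z \<in> box (x + d, y) (c, y + d)"
  shows "y \<le> b'" "b' + s \<le> y + d"
proof -
  have z': "a' \<le> fst z" "fst z \<le> a' + s" "b' \<le> snd z" "snd z \<le> b' + s"
    "x + d < fst z" "fst z < c" "y < snd z" "snd z < y + d"
    using z by (auto simp: sq_def cbox_Pair_real box_Pair_real mem_Times_iff)
  have "y + d \<le> b' \<or> b' + s \<le> y + d"
    using z' Q top_edge(4) by (intro edge_line_not_through_square[OF polygon top_edge(1) Q(2) on_top_edge]) auto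
  then show "b' + s \<le> y + d" using z' by linarith
  have "y \<le> b' \<or> b' + s \<le> y"
    using z' Q bottom_edge(4) by (intro edge_line_not_through_square[OF polygon bottom_edge(1) Q(2) on_bottom_edge]) auto
  then show "y \<le> b'" using z' by linarith
qed

lemma square_leaving_pack_starts_late:
  assumes Q: "s > 0" "sq a' b' s \<subseteq> region vs"
    and meets: "sq a' b' s \<inter> box (x + d, y) (e, y + d) \<noteq> {}" and e: "e \<le> c"
    and leaves: "\<not> sq a' b' s \<subseteq> cbox (x, y) (e, y + d)"
  shows "e - d < a'"
proof -
  obtain z where z: "z \<in> sq a' b' s" "z \<in> box (x + d, y) (e, y + d)" using meets by blast
  then have "z \<in> box (x + d, y) (c, y + d)" using e by (auto simp: box_Pair_real)
  then have "y \<le> b'" "b' + s \<le> y + d" using square_meeting_band_confined[OF Q z(1)] by auto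
  moreover have "x + d < a' + s" "a' < e" using z by (auto simp: sq_def cbox_Pair_real box_Pair_real mem_Times_iff)
  ultimately have "e < a' + s" using leaves by (auto simp: sq_def cbox_Pair_real)
  then show ?thesis using \<open>y \<le> b'\<close> \<open>b' + s \<le> y + d\<close> by linarith
qed

lemma pack_margin:
  assumes U: "finite U" "\<forall>Q\<in>U. valid_square (region vs) Q" and e: "e \<le> c"
  obtains m where "e - d < m" "m \<le> e"
    "\<And>Q. Q \<in> U \<Longrightarrow> Q \<inter> box (x + d, y) (e, y + d) \<noteq> {} \<Longrightarrow> Inf (fst ` Q) < m \<Longrightarrow>
       Q \<subseteq> cbox (x, y) (e, y + d)"
proof -
  define late where "late = {Q \<in> U. Q \<inter> box (x + d, y) (e, y + d) \<noteq> {} \<and> \<not> Q \<subseteq> cbox (x, y) (e, y + d)}"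
  define m where "m = Min (insert e ((\<lambda>Q. Inf (fst ` Q)) ` late))"
  have finite_late: "finite ((\<lambda>Q. Inf (fst ` Q)) ` late)" using U(1) by (simp add: late_def)
  have "e - d < Inf (fst ` Q)" if Q_late: "Q \<in> late" for Q
  proof -
    have "valid_square (region vs) Q" using Q_late U(2) by (simp add: late_def)
    then obtain a' b' s where Q: "s > 0" "Q = sq a' b' s" "Q \<subseteq> region vs"
      unfolding valid_square_def by blast
    then have "e - d < a'"
      using square_leaving_pack_starts_late[of s a' b' e] Q_late e by (simp add: late_def)
    then show ?thesis using Q(1,2) Inf_fst_sq[of s a' b'] by simp
  qed
  then have "e - d < m" unfolding m_def using finite_late d_pos by simp
  moreover have "m \<le> e" unfolding m_def using finite_late by simp
  moreover have "Q \<subseteq> cbox (x, y) (e, y + d)"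
    if "Q \<in> U" "Q \<inter> box (x + d, y) (e, y + d) \<noteq> {}" "Inf (fst ` Q) < m" for Q
  proof (rule ccontr)
    assume "\<not> Q \<subseteq> cbox (x, y) (e, y + d)"
    then have "Q \<in> late" using that(1,2) by (simp add: late_def)
    then have "m \<le> Inf (fst ` Q)" unfolding m_def using finite_late by (intro Min_le) auto
    then show False using that(3) by linarith
  qed
  ultimately show ?thesis by (rule that)
qed

lemma square_overlapping_pack_narrow:
  assumes Q: "valid_square (region vs) Q" and overlap: "overlaps (cbox (x + d, y) (e, y + d)) Q"
    and e: "e \<le> c" and uv: "u \<in> Q" "v \<in> Q"
  shows "\<bar>fst u - fst v\<bar> \<le> d"
proof -
  obtain a' b' s where Q': "s > 0" "Q = sq a' b' s" "Q \<subseteq> region vs"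
    using Q unfolding valid_square_def by blast
  have sq: "sq a' b' s \<subseteq> region vs" using Q' by simp
  obtain z where "z \<in> interior (cbox (x + d, y) (e, y + d))" "z \<in> interior Q"
    using overlap unfolding overlaps_def by blast
  then have "z \<in> box (x + d, y) (c, y + d)" "z \<in> sq a' b' s"
    using e Q'(2) interior_subset by (auto simp: box_Pair_real)
  then have "y \<le> b'" "b' + s \<le> y + d" using square_meeting_band_confined[OF Q'(1) sq] by auto
  then show ?thesis using uv Q'(2) by (auto simp: sq_def cbox_Pair_real mem_Times_iff abs_le_iff)
qed

lemma many_squares_overlap_pack:
  fixes \<eta> :: nat and U :: "pt set set"
  assumes U: "finite U" "\<forall>Q\<in>U. valid_square (region vs) Q" "\<Union>U = region vs"
    and \<eta>: "1 \<le> \<eta>" "x + d + real \<eta> * d < c"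
  defines "e \<equiv> x + d + real \<eta> * d"
  shows "\<eta> \<le> card {Q \<in> U. Q \<subseteq> cbox (x, y) (e, y + d) \<and> overlaps (cbox (x + d, y) (e, y + d)) Q}"
    (is "_ \<le> card ?D")
proof -
  have "e \<le> c" using \<eta>(2) by (simp add: e_def)
  then obtain m where m: "e - d < m" "m \<le> e"
    and early: "\<And>Q. Q \<in> U \<Longrightarrow> Q \<inter> box (x + d, y) (e, y + d) \<noteq> {} \<Longrightarrow> Inf (fst ` Q) < m \<Longrightarrow>
       Q \<subseteq> cbox (x, y) (e, y + d)"
    using pack_margin[OF U(1,2)] by blast
  have "x + real \<eta> * d < m" using m(1) by (simp add: e_def)
  then obtain t where t: "\<And>k. k < \<eta> \<Longrightarrow> x + d < t k \<and> t k < m"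
    and spread: "\<And>k l. k < \<eta> \<Longrightarrow> l < \<eta> \<Longrightarrow> k \<noteq> l \<Longrightarrow> d < \<bar>t k - t l\<bar>"
    using spread_points[OF d_pos \<eta>(1)] by blast
  define p where "p k = (t k, y + d / 2)" for k
  have p_in: "p k \<in> box (x + d, y) (e, y + d)" if "k < \<eta>" for k
    using t[OF that] m(2) d_pos by (simp add: p_def box_Pair_real)
  have pack_in_region: "box (x + d, y) (e, y + d) \<subseteq> region vs"
    using closed_band_in_region \<eta>(2) d_pos by (force simp: e_def box_Pair_real cbox_Pair_real)
  show ?thesis
  proof (rule card_ge_if_covers_spread_points[where f = fst and p = p and d = d])
    show "finite ?D" using U(1) by simp
    show "\<exists>Q\<in>?D. p k \<in> Q" if k: "k < \<eta>" for k
    proof -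
      obtain Q where Q: "Q \<in> U" "p k \<in> Q" using U(3) p_in[OF k] pack_in_region by blast
      then obtain a' b' s where Q': "s > 0" "Q = sq a' b' s" using U(2) by (auto simp: valid_square_def)
      then have "Inf (fst ` Q) \<le> t k" using Q(2) Inf_fst_sq[of s a' b'] by (auto simp: p_def sq_def cbox_Pair_real)
      then have "Q \<subseteq> cbox (x, y) (e, y + d)" using early[OF Q(1)] Q(2) p_in[OF k] t[OF k] by fastforce
      moreover have "overlaps (cbox (x + d, y) (e, y + d)) Q"
        using interior_sq_meets_open[OF Q'(1) _ open_box p_in[OF k]] Q(2) Q'(2) by (auto simp: overlaps_def)
      ultimately show ?thesis using Q by blast
    qed
    show "\<bar>fst u - fst v\<bar> \<le> d" if "Q \<in> ?D" "u \<in> Q" "v \<in> Q" for Q u v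
      using square_overlapping_pack_narrow[of Q e u v] that U(2) \<eta>(2) by (simp add: e_def)
    show "d < \<bar>fst (p k) - fst (p l)\<bar>" if "k < \<eta>" "l < \<eta>" "k \<noteq> l" for k l
      using spread[OF that] by (simp add: p_def)
  qed
qed

lemma partial_solution_insert_pack:
  fixes \<eta> :: nat
  assumes part: "partial_solution (region vs) \<R>" and S: "sq x y d \<in> \<R>"
    and \<eta>: "1 \<le> \<eta>" "x + d + real \<eta> * d < c"
  defines "R \<equiv> cbox (x + d, y) (x + d + real \<eta> * d, y + d)"
  assumes apart: "\<forall>R'\<in>\<R>. \<not> overlaps R R'"
  shows "partial_solution (region vs) (insert R \<R>)"
proof -
  obtain Rs where mc: "min_covering (region vs) Rs" and "\<R> \<subseteq> Rs"
    using part unfolding partial_solution_def by blast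
  define U where "U = (\<Union>A\<in>Rs. ext A)"
  define D where "D = {Q \<in> U. Q \<subseteq> cbox (x, y) (x + d + real \<eta> * d, y + d) \<and> overlaps R Q}"
  have U: "finite U" "\<forall>Q\<in>U. valid_square (region vs) Q" "\<Union>U = region vs"
    using mc unfolding min_covering_def min_square_cover_def U_def by blast+
  have ext_R: "ext R = (\<lambda>i. sq (x + d + real i * d) y d) ` {..<\<eta>}"
    using ext_horizontal[OF d_pos \<eta>(1)] by (simp add: R_def)
  have "R \<subseteq> region vs"
    using closed_band_in_region \<eta>(2) d_pos by (force simp: R_def cbox_Pair_real)
  then have "recpack (region vs) R" unfolding recpack_def R_def using d_pos \<eta>(1) by blast
  moreover have "card (ext R) \<le> card D"
  proof -
    have "card (ext R) \<le> \<eta>" unfolding ext_R using card_image_le[of "{..<\<eta>}"] by simp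
    also have "\<eta> \<le> card D" using many_squares_overlap_pack[OF U \<eta>] unfolding D_def R_def .
    finally show ?thesis .
  qed
  moreover have "\<Union>D \<subseteq> \<Union>(ext R) \<union> \<Union>(U - D)"
  proof -
    have "sq x y d \<in> U" using S \<open>\<R> \<subseteq> Rs\<close> ext_sq[OF d_pos] by (force simp: U_def)
    moreover have "sq x y d \<notin> D"
      by (auto simp: D_def R_def overlaps_def sq_def box_Pair_real)
    moreover have "\<Union>(ext R) = R" unfolding R_def by (rule Union_ext_horizontal[OF d_pos \<eta>(1)])
    moreover have "\<Union>D \<subseteq> sq x y d \<union> R" by (auto simp: D_def sq_def R_def cbox_Pair_real)
    ultimately show ?thesis by blast
  qed
  moreover have "U \<inter> ext R \<subseteq> D"
    using overlaps_ext square_in_ext(1) by (fastforce simp: D_def R_def cbox_Pair_real)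
  ultimately have "min_covering (region vs) (insert R (split_off Rs D))"
    using min_covering_exchange[OF mc, of D R] ext_R by (auto simp: D_def U_def)
  moreover have "ext R' \<inter> D = {}" if "R' \<in> \<R>" for R'
    using apart that overlaps_mono square_in_ext(1) by (fastforce simp: D_def)
  then have "\<R> \<subseteq> insert R (split_off Rs D)" using \<open>\<R> \<subseteq> Rs\<close> by (auto simp: split_off_def)
  ultimately show ?thesis unfolding partial_solution_def by blast
qed

end

theorem lemma4p13:
  fixes vs :: "(int \<times> int) list" and \<eta> :: nat and x y d :: real
    and i1 i2 :: nat and Y :: "(real \<times> real) set" and \<R> :: "(real \<times> real) set set"
  assumes P: "ortho_polygon vs"
    and eta: "\<eta> \<ge> 1"
    and S_max: "maximal_square (region vs) (sq x y d)"
    and e1: "i1 < length vs" "horiz_edge vs i1"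
       "seg_overlap (closed_segment (x, y + d) (x + d, y + d)) (edge vs i1)"
       "(x + d, y + d) \<in> edge vs i1"
    and e2: "i2 < length vs" "horiz_edge vs i2"
       "seg_overlap (closed_segment (x, y) (x + d, y)) (edge vs i2)"
       "(x + d, y) \<in> edge vs i2"
    and Y: "strip vs Y"
       "\<exists>a b c e. Y = cbox (a, b) (c, e) \<and>
          closed_segment (a, e) (c, e) \<subseteq> edge vs i1 \<and>
          closed_segment (a, b) (c, b) \<subseteq> edge vs i2 \<and>
          c - (x + d) > real \<eta> * d"
    and part: "partial_solution (region vs) \<R>"
    and S_in: "sq x y d \<in> \<R>"
    and no_ov: "\<forall>R'\<in>\<R>. \<not> overlaps (cbox (x + d, y) (x + d + real \<eta> * d, y + d)) R'"
  shows "partial_solution (region vs) (insert (cbox (x + d, y) (x + d + real \<eta> * d, y + d)) \<R>)"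
proof -
  \<comment> \<open>only the validity of S is used, not its maximality\<close>
  obtain x0 y0 s where "s > 0" "sq x y d = sq x0 y0 s" and S: "sq x y d \<subseteq> region vs"
    using S_max unfolding maximal_square_def valid_square_def by blast
  then have d: "d > 0"
    using cbox_Pair_eq_imp_eq[of x0 "x0 + s" y0 "y0 + s" x y "x + d" "y + d"] by (simp add: sq_def)
  obtain a b c e where Y_eq: "Y = cbox (a, b) (c, e)" and far: "c - (x + d) > real \<eta> * d"
    and "closed_segment (a, e) (c, e) \<subseteq> edge vs i1" "closed_segment (a, b) (c, b) \<subseteq> edge vs i2"
    using Y(2) by blast
  then have top: "(c, e) \<in> edge vs i1" and bottom: "(c, b) \<in> edge vs i2"
    using ends_in_segment(2) by blast+
  obtain x1 where "e = y + d" "x1 < x + d" "closed_segment (x1, y + d) (c, y + d) \<subseteq> edge vs i1"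
    using horiz_edge_through_corner[OF e1(2) d e1(3,4) top] by blast
  moreover obtain x2 where "b = y" "x2 < x + d" "closed_segment (x2, y) (c, y) \<subseteq> edge vs i2"
    using horiz_edge_through_corner[OF e2(2) d e2(3,4) bottom] by blast
  moreover have "0 < real \<eta> * d" using eta d by simp
  ultimately interpret square_strip_band vs x y d a c x1 x2 i1 i2
    using P d S strip_cbox[OF Y(1)[unfolded Y_eq]] e1(1,2) e2(1,2) far by unfold_locales auto
  show ?thesis
    using partial_solution_insert_pack[OF part S_in eta] far no_ov by simp
qed

end
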